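(* Let $X,Y\subset\mathbb{C}$ (with the Euclidean metric) and let $f:X\to Y$ be a homeomorphism, where $X$ is of bounded turning. Then $f$ is quasisymmetric if and only if there is a constant $C$ such that for every $x\in X$ and every $r>0$ the set $f(B(x,r))$ is $C$-roundish at $f(x)$.
   Context: $B(x,r)=\{y\in X:|y-x|\le r\}$ is the closed ball in $X$. $X$ is of bounded turning if there is $L>0$ such that any $z_1,z_2\in X$ are joined by a curve $[z_1,z_2]\subset X$ with $\operatorname{diam}[z_1,z_2]\le L|z_1-z_2|$. For $S\subset Y$ and $y\in S$, the inradius is $\operatorname{inr}(S,y)=\inf\{|y-w|:w\in Y\setminus S\}$; $S$ is $C$-roundish at $y$ if $\operatorname{diam}S\le C\operatorname{inr}(S,y)$. A homeomorphism $f$ is quasisymmetric if there is a homeomorphism $\eta:[0,\infty)\to[0,\infty)$ such that for all $t>0$ and $a,b,x\in X$, $|x-a|\le t|x-b|$ implies $|f(x)-f(a)|\le\eta(t)|f(x)-f(b)|$. *)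

theory Defs
  imports "HOL-Analysis.Analysis"
begin

definition cballX :: "complex set \<Rightarrow> complex \<Rightarrow> real \<Rightarrow> complex set" where
  "cballX X x r = {y \<in> X. cmod (y - x) \<le> r}"

definition bounded_turning :: "complex set \<Rightarrow> bool" where
  "bounded_turning X \<longleftrightarrow> (\<exists>L>0. \<forall>z1\<in>X. \<forall>z2\<in>X. \<exists>g. path g \<and> pathstart g = z1 \<and>
      pathfinish g = z2 \<and> path_image g \<subseteq> X \<and> diameter (path_image g) \<le> L * cmod (z1 - z2))"

definition ediam :: "complex set \<Rightarrow> ereal" where
  "ediam S = (SUP p\<in>S \<times> S. ereal (cmod (fst p - snd p)))"

text \<open>Inradius of S \<subseteq> Y at y, relative to the ambient set Y; infinite if Y - S is empty.\<close>
definition inr :: "complex set \<Rightarrow> complex set \<Rightarrow> complex \<Rightarrow> ereal" where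
  "inr Y S y = (INF w\<in>Y - S. ereal (cmod (y - w)))"

definition roundish :: "real \<Rightarrow> complex set \<Rightarrow> complex set \<Rightarrow> complex \<Rightarrow> bool" where
  "roundish C Y S y \<longleftrightarrow> ediam S \<le> ereal C * inr Y S y"

definition quasisymmetric :: "complex set \<Rightarrow> complex set \<Rightarrow> (complex \<Rightarrow> complex) \<Rightarrow> bool" where
  "quasisymmetric X Y f \<longleftrightarrow> (\<exists>g. homeomorphism X Y f g) \<and>
     (\<exists>\<eta> \<eta>'. homeomorphism {0::real..} {0..} \<eta> \<eta>' \<and>
        (\<forall>t>0. \<forall>a\<in>X. \<forall>b\<in>X. \<forall>x\<in>X. cmod (x - a) \<le> t * cmod (x - b) \<longrightarrow>
            cmod (f x - f a) \<le> \<eta> t * cmod (f x - f b)))"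

end

theory Submission
  imports Defs
begin

text \<open>Quasisymmetry gives roundness directly: a point outside the image of a ball is the image of
  a point farther from the centre than every point of the ball, so \<open>\<eta>(1)\<close> bounds the diameter of
  the image by a multiple of its inradius.

  Conversely, roundness of images of balls gives weak quasisymmetry: \<open>|x - a| < |x - b|\<close> implies
  \<open>|f x - f a| \<le> H |f x - f b|\<close>. Bounded turning upgrades this to quasisymmetry, the key input
  being that only boundedly many points of a disc in the plane can be uniformly separated. For
  small ratios, points of \<open>X\<close> on circles about \<open>x\<close> with radii shrinking by a fixed factor have
  separated images unless the image distance halves, so \<open>f\<close> contracts like \<open>root m t\<close>.
  For large ratios, \<open>a\<close> is reached from \<open>b\<close> by a chain of boundedly many short steps along a
  curve of controlled diameter, and weak quasisymmetry bounds each step, so \<open>f\<close> expands at most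
  like \<open>t ^ j\<close>. The gauge \<open>A * max (root m t) (t ^ j)\<close> is a homeomorphism of \<open>{0..}\<close>.\<close>

section \<open>Separated points in a disc\<close>

lemma card_separated_subset_cball_le:
  fixes S :: "complex set"
  assumes "finite S" and "S \<subseteq> cball c R" and "\<delta> > 0"
    and separated: "\<And>z w. z \<in> S \<Longrightarrow> w \<in> S \<Longrightarrow> z \<noteq> w \<Longrightarrow> \<delta> < cmod (z - w)"
  shows "card S \<le> (2 * nat \<lceil>2 * R / \<delta>\<rceil> + 1)^2"
proof -
  define n where "n = nat \<lceil>2 * R / \<delta>\<rceil>"
  define e where "e = \<delta> / 2"
  have "e > 0" using \<open>\<delta> > 0\<close> by (simp add: e_def)
  define cell where "cell z = (\<lfloor>Re (z - c) / e\<rfloor>, \<lfloor>Im (z - c) / e\<rfloor>)" for z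
  have "inj_on cell S"
  proof (rule inj_onI)
    fix z w assume "z \<in> S" "w \<in> S" "cell z = cell w"
    then have "\<bar>Re (z - c) / e - Re (w - c) / e\<bar> < 1" "\<bar>Im (z - c) / e - Im (w - c) / e\<bar> < 1"
      unfolding cell_def prod.inject by linarith+
    then have "\<bar>Re (z - w)\<bar> < e" "\<bar>Im (z - w)\<bar> < e"
      using \<open>e > 0\<close> by (simp_all add: diff_divide_distrib[symmetric] divide_less_eq)
    then have "cmod (z - w) < \<delta>"
      using cmod_le[of "z - w"] by (simp add: e_def)
    then show "z = w" using separated \<open>z \<in> S\<close> \<open>w \<in> S\<close> by force
  qed
  moreover have "cell ` S \<subseteq> {-int n..int n} \<times> {-int n..int n}"
  proof (rule image_subsetI)
    fix z assume "z \<in> S"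
    then have "cmod (z - c) \<le> R" using assms(2) by (auto simp: dist_norm norm_minus_commute)
    moreover have "R / e \<le> of_int (int n)"
      unfolding n_def e_def by (simp add: mult.commute)
    ultimately have "\<bar>Re (z - c) / e\<bar> \<le> of_int (int n)" "\<bar>Im (z - c) / e\<bar> \<le> of_int (int n)"
      using abs_Re_le_cmod[of "z - c"] abs_Im_le_cmod[of "z - c"] \<open>e > 0\<close>
      by (simp_all add: divide_le_eq mult.commute)
    moreover have "\<lfloor>y\<rfloor> \<in> {-int n..int n}" if "\<bar>y\<bar> \<le> of_int (int n)" for y :: real
      using that by (simp add: le_floor_iff floor_le_iff abs_le_iff)
    ultimately show "cell z \<in> {-int n..int n} \<times> {-int n..int n}"
      unfolding cell_def by simp
  qed
  ultimately have "card S \<le> card ({-int n..int n} \<times> {-int n..int n})"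
    by (intro card_inj_on_le) auto
  also have "\<dots> = (2 * n + 1)^2"
  proof -
    have "card {-int n..int n} = 2 * n + 1" by simp
    then show ?thesis by (simp only: card_cartesian_product power2_eq_square)
  qed
  finally show ?thesis unfolding n_def .
qed

lemma length_le_if_separated_sequence_in_cball:
  fixes u :: "nat \<Rightarrow> complex"
  assumes "\<delta> > 0" and "\<And>k. k < K \<Longrightarrow> u k \<in> cball c R"
    and separated: "\<And>j k. j < k \<Longrightarrow> k < K \<Longrightarrow> \<delta> < cmod (u j - u k)"
  shows "K \<le> (2 * nat \<lceil>2 * R / \<delta>\<rceil> + 1)^2"
proof -
  have separated': "\<delta> < cmod (u j - u k)" if "j < K" "k < K" "j \<noteq> k" for j k
    using separated[of j k] separated[of k j] that by (cases "j < k") (auto simp: norm_minus_commute)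
  have "inj_on u {..<K}"
    using separated' \<open>\<delta> > 0\<close> by (intro inj_onI) force
  then have "card (u ` {..<K}) = K" by (simp add: card_image)
  moreover have "card (u ` {..<K}) \<le> (2 * nat \<lceil>2 * R / \<delta>\<rceil> + 1)^2"
    using assms(1,2) separated' by (intro card_separated_subset_cball_le) auto
  ultimately show ?thesis by simp
qed

section \<open>Chains along curves\<close>

definition delta_chain :: "complex \<Rightarrow> complex \<Rightarrow> complex set \<Rightarrow> real \<Rightarrow> complex list \<Rightarrow> bool" where
  "delta_chain p q P \<delta> ps \<longleftrightarrow> ps \<noteq> [] \<and> hd ps = p \<and> last ps = q \<and> set ps \<subseteq> P \<and>
     (\<forall>i. Suc i < length ps \<longrightarrow> cmod (ps!i - ps!Suc i) \<le> \<delta>)"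

lemma delta_chain_shortcut:
  assumes chain: "delta_chain p q P \<delta> ps" and "i + 2 \<le> j" "j < length ps"
    and close: "cmod (ps!i - ps!j) \<le> \<delta>"
  shows "delta_chain p q P \<delta> (take (Suc i) ps @ drop j ps)"
proof -
  let ?ps = "take (Suc i) ps @ drop j ps"
  have steps: "cmod (ps!k - ps!Suc k) \<le> \<delta>" if "Suc k < length ps" for k
    using chain that unfolding delta_chain_def by blast
  have len_take: "length (take (Suc i) ps) = Suc i" using assms(2,3) by simp
  have "cmod (?ps!k - ?ps!Suc k) \<le> \<delta>" if k: "Suc k < length ?ps" for k
  proof (cases k "i" rule: linorder_cases)
    case less
    then show ?thesis using steps[of k] len_take by (simp add: nth_append)
  next
    case equal
    then show ?thesis using close len_take assms(2,3) by (simp add: nth_append)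
  next
    case greater
    then have "j + k - i = Suc (j + k - Suc i)" by arith
    with greater have "?ps!k = ps!(j + (k - Suc i))" "?ps!Suc k = ps!Suc (j + (k - Suc i))"
      using len_take assms(2,3) by (simp_all add: nth_append Suc_diff_le)
    moreover have "Suc (j + (k - Suc i)) < length ps" using k greater by simp
    ultimately show ?thesis using steps by simp
  qed
  moreover have "set ?ps \<subseteq> P"
    using chain set_take_subset set_drop_subset unfolding delta_chain_def by fastforce
  ultimately show ?thesis
    using chain assms(2,3) unfolding delta_chain_def by (auto simp: hd_append last_append)
qed

lemma path_has_delta_chain:
  assumes "path g" and "\<delta> > 0"
  shows "\<exists>ps. delta_chain (pathstart g) (pathfinish g) (path_image g) \<delta> ps"
proof -
  have "uniformly_continuous_on {0..1} g"
    using \<open>path g\<close> unfolding path_def by (intro compact_uniformly_continuous) auto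
  then obtain e where "e > 0"
    and uc: "\<And>s t. s \<in> {0..1} \<Longrightarrow> t \<in> {0..1} \<Longrightarrow> dist t s < e \<Longrightarrow> dist (g t) (g s) < \<delta>"
    using \<open>\<delta> > 0\<close> unfolding uniformly_continuous_on_def by metis
  obtain n :: nat where "1 / real (Suc n) < e" using \<open>e > 0\<close> by (metis nat_approx_posE)
  define m where "m = Suc n"
  define ps where "ps = map (\<lambda>k. g (real k / real m)) [0..<Suc m]"
  have len: "length ps = Suc m" unfolding ps_def by simp
  have nth: "ps!k = g (real k / real m)" if "k < Suc m" for k
    using that unfolding ps_def by (simp del: upt_Suc)
  have "real k / real m \<in> {0..1}" if "k < Suc m" for k
    using that by (simp add: m_def)
  then have "set ps \<subseteq> path_image g"
    unfolding path_image_def by (auto simp: in_set_conv_nth len nth)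
  moreover have "cmod (ps!i - ps!Suc i) \<le> \<delta>" if "Suc i < length ps" for i
  proof -
    have "dist (real (Suc i) / real m) (real i / real m) = 1 / real m"
      by (simp add: m_def dist_real_def diff_divide_distrib[symmetric])
    then have "dist (g (real (Suc i) / real m)) (g (real i / real m)) < \<delta>"
      using uc that \<open>1 / real (Suc n) < e\<close> len by (simp add: m_def)
    then show ?thesis using that len nth by (simp add: dist_norm norm_minus_commute)
  qed
  moreover have "ps \<noteq> []" using len by auto
  ultimately have "delta_chain (pathstart g) (pathfinish g) (path_image g) \<delta> ps"
    unfolding delta_chain_def pathstart_def pathfinish_def
    using len nth[of 0] nth[of m] hd_conv_nth[of ps] last_conv_nth[of ps] by (auto simp: m_def)
  then show ?thesis by blast
qed

text \<open>In a chain of minimal length, points two or more steps apart are more than \<open>\<delta>\<close> apart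
  (otherwise a shortcut exists), so the even-indexed points form a \<open>\<delta>\<close>-separated family.\<close>
lemma path_has_short_delta_chain:
  assumes "path g" and "path_image g \<subseteq> cball c R" and "\<delta> > 0"
  shows "\<exists>ps. delta_chain (pathstart g) (pathfinish g) (path_image g) \<delta> ps \<and>
      length ps \<le> 2 * (2 * nat \<lceil>2 * R / \<delta>\<rceil> + 1)^2 + 1"
proof -
  let ?chain = "delta_chain (pathstart g) (pathfinish g) (path_image g) \<delta>"
  obtain ps where ps: "?chain ps" and minimal: "\<And>ps'. ?chain ps' \<Longrightarrow> length ps \<le> length ps'"
    using path_has_delta_chain[OF assms(1,3)]
      ex_has_least_nat[where m = length] by blast
  have separated: "\<delta> < cmod (ps!i - ps!j)" if "i + 2 \<le> j" "j < length ps" for i j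
  proof (rule ccontr)
    assume "\<not> ?thesis"
    then have "?chain (take (Suc i) ps @ drop j ps)"
      using delta_chain_shortcut[OF ps that] by simp
    then show False using minimal that by fastforce
  qed
  define K where "K = Suc (length ps) div 2"
  have "K \<le> (2 * nat \<lceil>2 * R / \<delta>\<rceil> + 1)^2"
  proof (rule length_le_if_separated_sequence_in_cball[where u = "\<lambda>k. ps!(2*k)"])
    show "ps!(2*k) \<in> cball c R" if "k < K" for k
    proof -
      have "2*k < length ps" using that unfolding K_def by presburger
      then have "ps!(2*k) \<in> set ps" by simp
      then show ?thesis using ps assms(2) unfolding delta_chain_def by blast
    qed
    show "\<delta> < cmod (ps!(2*j) - ps!(2*k))" if "j < k" "k < K" for j k
      using that separated unfolding K_def by simp
  qed fact
  then show ?thesis using ps unfolding K_def by auto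
qed

section \<open>Weak quasisymmetry\<close>

definition turning_bound :: "complex set \<Rightarrow> real \<Rightarrow> bool" where
  "turning_bound X L \<longleftrightarrow> (\<forall>z1\<in>X. \<forall>z2\<in>X. \<exists>g. path g \<and> pathstart g = z1 \<and>
      pathfinish g = z2 \<and> path_image g \<subseteq> X \<and> diameter (path_image g) \<le> L * cmod (z1 - z2))"

lemma bounded_turning_iff: "bounded_turning X \<longleftrightarrow> (\<exists>L>0. turning_bound X L)"
  unfolding bounded_turning_def turning_bound_def ..

lemma turning_bound_imp_path_connected: "turning_bound X L \<Longrightarrow> path_connected X"
  unfolding turning_bound_def path_connected_def by meson

lemma connected_distance_attained:
  assumes "connected X" and "x \<in> X" "b \<in> X" and "0 \<le> \<rho>" "\<rho> \<le> cmod (x - b)"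
  shows "\<exists>c\<in>X. cmod (x - c) = \<rho>"
proof -
  let ?dist = "(\<lambda>c. cmod (x - c)) ` X"
  have "connected ?dist"
    using assms(1) by (intro connected_continuous_image continuous_intros)
  moreover have "0 \<in> ?dist" "cmod (x - b) \<in> ?dist"
    using assms(2,3) by force+
  ultimately have "\<rho> \<in> ?dist"
    using assms(4,5) by (rule connectedD_interval)
  then show ?thesis by auto
qed

lemma real_power_bracket:
  fixes D t :: real
  assumes "1 < D" "1 \<le> t"
  shows "\<exists>k. D^k \<le> t \<and> t < D^Suc k"
proof -
  obtain n where "t < D^n" using real_arch_pow[OF assms(1)] by blast
  moreover have "\<not> t < D^0" using assms(2) by simp
  ultimately obtain k where "\<not> t < D^k" "t < D^Suc k"
    using exists_least_lemma[of "\<lambda>k. t < D^k"] by blast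
  then show ?thesis using not_less by blast
qed

text \<open>Weak quasisymmetry, in the form with a strict hypothesis that the roundness of
  images of balls yields directly.\<close>
definition weakly_qs :: "complex set \<Rightarrow> (complex \<Rightarrow> complex) \<Rightarrow> real \<Rightarrow> bool" where
  "weakly_qs X f H \<longleftrightarrow> (\<forall>x\<in>X. \<forall>a\<in>X. \<forall>b\<in>X. cmod (x - a) < cmod (x - b) \<longrightarrow>
      cmod (f x - f a) \<le> H * cmod (f x - f b))"

lemma weakly_qsD:
  "weakly_qs X f H \<Longrightarrow> x \<in> X \<Longrightarrow> a \<in> X \<Longrightarrow> b \<in> X \<Longrightarrow> cmod (x - a) < cmod (x - b) \<Longrightarrow>
    cmod (f x - f a) \<le> H * cmod (f x - f b)"
  unfolding weakly_qs_def by blast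

lemma weakly_qs_mono:
  assumes "weakly_qs X f H" and "H \<le> H'"
  shows "weakly_qs X f H'"
  unfolding weakly_qs_def
proof (intro ballI impI)
  fix x a b assume "x \<in> X" "a \<in> X" "b \<in> X" "cmod (x - a) < cmod (x - b)"
  then have "cmod (f x - f a) \<le> H * cmod (f x - f b)" by (rule weakly_qsD[OF assms(1)])
  also have "\<dots> \<le> H' * cmod (f x - f b)" using assms(2) by (rule mult_right_mono) simp
  finally show "cmod (f x - f a) \<le> H' * cmod (f x - f b)" .
qed

lemma weakly_qs_far_point:
  assumes "weakly_qs X f H" and "x \<in> X" "c \<in> X" "c' \<in> X"
    and "2 * cmod (x - c) < cmod (x - c')"
  shows "cmod (f c - f x) \<le> H * cmod (f c - f c')"
proof (rule weakly_qsD[OF assms(1,3,2,4)])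
  show "cmod (c - x) < cmod (c - c')"
    using norm_triangle_ineq[of "x - c" "c - c'"] assms(5) by (simp add: norm_minus_commute)
qed

text \<open>One more than the packing bound for points in a disc of radius \<open>H F\<close> that are
  \<open>F / (2 H\<^sup>2)\<close>-separated.\<close>
definition decay_exponent :: "real \<Rightarrow> nat" where
  "decay_exponent H = (2 * nat \<lceil>4 * H^3\<rceil> + 1)^2 + 1"

text \<open>If the image distance did not halve, points of \<open>X\<close> on the circles about \<open>x\<close> of radii
  \<open>d / (2 \<cdot> 4\<^sup>k)\<close> would have images in a fixed disc, pairwise separated by a fixed amount:
  too many of them for the plane.\<close>
lemma weakly_qs_decay:
  assumes qs: "weakly_qs X f H" and "H \<ge> 1" and "connected X"
    and "x \<in> X" "a \<in> X" "b \<in> X"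
    and far: "4^decay_exponent H * cmod (x - a) < cmod (x - b)"
  shows "cmod (f x - f a) \<le> 1/2 * cmod (f x - f b)"
proof (rule ccontr)
  assume not_halved: "\<not> ?thesis"
  define N where "N = decay_exponent H"
  define d where "d = cmod (x - b)"
  define F where "F = cmod (f x - f b)"
  define \<rho> where "\<rho> k = d / (2 * 4^k)" for k :: nat
  have "0 \<le> 4^N * cmod (x - a)" by simp
  then have "d > 0" using far unfolding N_def d_def by linarith
  have \<rho>_pos: "\<rho> k > 0" for k
    using \<open>d > 0\<close> unfolding \<rho>_def by simp
  have \<rho>_less: "\<rho> k < d" for k
  proof -
    have "1 < 2 * (4::real)^k" using one_le_power[of "4::real" k] by linarith
    then show ?thesis using \<open>d > 0\<close> unfolding \<rho>_def by (simp add: divide_less_eq)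
  qed
  have \<rho>_gt: "cmod (x - a) < \<rho> k" if "k < N" for k
  proof -
    have "(4::real)^Suc k \<le> 4^N" using that by (intro power_increasing) simp_all
    then have "2 * 4^k \<le> (4::real)^N" using zero_le_power[of "4::real" k] unfolding power_Suc by linarith
    then have "2 * 4^k * cmod (x - a) \<le> 4^N * cmod (x - a)"
      by (rule mult_right_mono) simp
    then have "2 * 4^k * cmod (x - a) < d"
      using far unfolding N_def d_def by linarith
    then show ?thesis unfolding \<rho>_def by (simp add: field_simps)
  qed
  have "\<exists>c\<in>X. cmod (x - c) = \<rho> k" for k
    using connected_distance_attained[OF assms(3,4,6)] \<rho>_pos[of k] \<rho>_less[of k]
    unfolding d_def by simp
  then obtain c where c_in: "\<And>k. c k \<in> X" and c_dist: "\<And>k. cmod (x - c k) = \<rho> k"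
    by metis
  have image_a: "cmod (f x - f a) \<le> H * cmod (f x - f (c k))" if "k < N" for k
    using weakly_qsD[OF qs assms(4,5) c_in] \<rho>_gt[OF that] c_dist by simp
  have "N > 0" unfolding N_def decay_exponent_def by simp
  then have "cmod (f x - f a) \<le> H * F"
    using weakly_qsD[OF qs assms(4,5,6)] \<rho>_gt[of 0] \<rho>_less[of 0] unfolding F_def d_def by simp
  then have "F > 0" using not_halved unfolding F_def by (cases "f x = f b") auto
  have in_disc: "f (c k) \<in> cball (f x) (H * F)" for k
    using weakly_qsD[OF qs assms(4) c_in assms(6)] c_dist \<rho>_less
    unfolding F_def d_def by (simp add: dist_norm)
  have separated: "F / (2 * H^2) < cmod (f (c j) - f (c k))" if "j < k" "k < N" for j k
  proof -
    have "4 * \<rho> k \<le> \<rho> j"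
      using that power_increasing[of "Suc j" k "4::real"] \<open>d > 0\<close> unfolding \<rho>_def
      by (simp add: field_simps)
    then have "2 * cmod (x - c k) < cmod (x - c j)" using c_dist \<rho>_pos[of k] by simp
    then have "cmod (f (c k) - f x) \<le> H * cmod (f (c k) - f (c j))"
      by (rule weakly_qs_far_point[OF qs assms(4) c_in c_in])
    then have "cmod (f x - f (c k)) \<le> H * cmod (f (c j) - f (c k))"
      by (simp add: norm_minus_commute)
    then have "H * cmod (f x - f (c k)) \<le> H * (H * cmod (f (c j) - f (c k)))"
      using \<open>H \<ge> 1\<close> by (simp add: mult_left_mono)
    moreover have "F / 2 < H * cmod (f x - f (c k))"
      using image_a[OF that(2)] not_halved unfolding F_def by simp
    ultimately have "F / 2 < H^2 * cmod (f (c j) - f (c k))"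
      by (simp add: power2_eq_square mult.assoc)
    then show ?thesis using \<open>H \<ge> 1\<close> by (simp add: field_simps)
  qed
  have "N \<le> (2 * nat \<lceil>2 * (H * F) / (F / (2 * H^2))\<rceil> + 1)^2"
    using length_le_if_separated_sequence_in_cball[OF _ in_disc separated] \<open>F > 0\<close> \<open>H \<ge> 1\<close>
    by simp
  also have "2 * (H * F) / (F / (2 * H^2)) = 4 * H^3"
    using \<open>F > 0\<close> \<open>H \<ge> 1\<close> by (simp add: field_simps power3_eq_cube power2_eq_square)
  finally show False unfolding N_def decay_exponent_def by simp
qed

lemma weakly_qs_iterated_decay:
  assumes qs: "weakly_qs X f H" and "H \<ge> 1" and "connected X"
    and "x \<in> X" "a \<in> X" "b \<in> X"
    and far: "(4^decay_exponent H)^k * cmod (x - a) < cmod (x - b)"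
  shows "cmod (f x - f a) \<le> H / 2^k * cmod (f x - f b)"
  using far assms(5)
proof (induction k arbitrary: a)
  case 0
  then show ?case using weakly_qsD[OF qs assms(4) _ assms(6)] by simp
next
  case (Suc k)
  define D :: real where "D = 4^decay_exponent H"
  have "D^k \<ge> 1" unfolding D_def by simp
  have "D * cmod (x - a) < cmod (x - b) / D^k"
    using Suc.prems(1) \<open>D^k \<ge> 1\<close> unfolding D_def[symmetric]
    by (simp add: pos_less_divide_eq mult_ac)
  then obtain \<rho> where \<rho>: "D * cmod (x - a) < \<rho>" "\<rho> < cmod (x - b) / D^k"
    using dense by blast
  have "cmod (x - b) / D^k \<le> cmod (x - b)"
    using \<open>D^k \<ge> 1\<close> by (simp add: divide_le_eq mult_le_cancel_left1)
  then have "\<rho> \<le> cmod (x - b)" using \<rho>(2) by linarith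
  moreover have "0 \<le> D * cmod (x - a)" unfolding D_def by simp
  then have "0 \<le> \<rho>" using \<rho>(1) by linarith
  ultimately obtain c where c: "c \<in> X" "cmod (x - c) = \<rho>"
    using connected_distance_attained[OF assms(3,4,6)] by blast
  have "D^k * cmod (x - c) < cmod (x - b)"
    using \<rho>(2) c(2) \<open>D^k \<ge> 1\<close> by (simp add: pos_less_divide_eq mult.commute)
  then have "cmod (f x - f c) \<le> H / 2^k * cmod (f x - f b)"
    using Suc.IH c(1) unfolding D_def by blast
  moreover have "cmod (f x - f a) \<le> 1/2 * cmod (f x - f c)"
    using weakly_qs_decay[OF qs assms(2,3,4) Suc.prems(2) c(1)] \<rho>(1) c(2) unfolding D_def by simp
  ultimately show ?case by simp
qed

lemma weakly_qs_along_delta_chain: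
  assumes qs: "weakly_qs X f H" and "H \<ge> 0" and "x \<in> X" "b \<noteq> x"
    and chain: "delta_chain b a X (cmod (x - b) / 4) ps" and "i < length ps"
  shows "cmod (f x - f (ps!i)) \<le> (1 + H)^i * cmod (f x - f b)"
  using \<open>i < length ps\<close>
proof (induction i)
  case 0
  then show ?case using chain hd_conv_nth[of ps] unfolding delta_chain_def by simp
next
  case (Suc i)
  define d where "d = cmod (x - b)"
  define F where "F = cmod (f x - f b)"
  have "d > 0" using \<open>b \<noteq> x\<close> unfolding d_def by simp
  have in_X: "ps!i \<in> X" "ps!Suc i \<in> X" "b \<in> X"
    using chain Suc.prems unfolding delta_chain_def by (auto dest: nth_mem hd_in_set)
  have step: "cmod (ps!i - ps!Suc i) \<le> d / 4"
    using chain Suc.prems unfolding delta_chain_def d_def by blast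
  show ?case
  proof (cases "cmod (x - ps!i) < d / 2")
    case True
    moreover have "cmod (x - ps!Suc i) \<le> cmod (x - ps!i) + cmod (ps!i - ps!Suc i)"
      using norm_triangle_ineq[of "x - ps!i" "ps!i - ps!Suc i"] by simp
    ultimately have "cmod (x - ps!Suc i) < cmod (x - b)"
      using step \<open>d > 0\<close> unfolding d_def by linarith
    then have "cmod (f x - f (ps!Suc i)) \<le> H * F"
      using weakly_qsD[OF qs \<open>x \<in> X\<close> in_X(2,3)] unfolding F_def by blast
    also have "\<dots> \<le> (1 + H)^Suc i * F"
    proof -
      have "H \<le> (1 + H)^1" by simp
      also have "\<dots> \<le> (1 + H)^Suc i" using \<open>H \<ge> 0\<close> by (intro power_increasing) simp_all
      finally show ?thesis unfolding F_def by (simp add: mult_right_mono)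
    qed
    finally show ?thesis unfolding F_def .
  next
    case False
    then have "cmod (ps!i - ps!Suc i) < cmod (ps!i - x)"
      using step \<open>d > 0\<close> by (simp add: norm_minus_commute)
    then have "cmod (f (ps!i) - f (ps!Suc i)) \<le> H * cmod (f x - f (ps!i))"
      using weakly_qsD[OF qs in_X(1,2) \<open>x \<in> X\<close>] by (simp add: norm_minus_commute)
    then have "cmod (f x - f (ps!Suc i)) \<le> (1 + H) * cmod (f x - f (ps!i))"
      using norm_triangle_ineq[of "f x - f (ps!i)" "f (ps!i) - f (ps!Suc i)"]
      by (simp add: algebra_simps)
    also have "\<dots> \<le> (1 + H) * ((1 + H)^i * F)"
      using Suc.IH Suc.prems \<open>H \<ge> 0\<close> unfolding F_def by (simp add: mult_left_mono)
    finally show ?thesis unfolding F_def by simp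
  qed
qed

text \<open>The length bound of a \<open>(d/4)\<close>-chain along a curve of diameter at most \<open>3 L d\<close>.\<close>
definition chain_length_bound :: "real \<Rightarrow> nat" where
  "chain_length_bound L = 2 * (2 * nat \<lceil>24 * L\<rceil> + 1)^2 + 1"

text \<open>Follow a short chain from \<open>b\<close> to \<open>a\<close> along a curve of controlled diameter.\<close>
lemma weakly_qs_doubling:
  assumes qs: "weakly_qs X f H" and "H \<ge> 0" and turning: "turning_bound X L" and "L \<ge> 0"
    and "x \<in> X" "a \<in> X" "b \<in> X"
    and near: "cmod (x - a) < 2 * cmod (x - b)"
  shows "cmod (f x - f a) \<le> (1 + H)^chain_length_bound L * cmod (f x - f b)"
proof -
  define d where "d = cmod (x - b)"
  have "d > 0" using near norm_ge_zero[of "x - a"] unfolding d_def by linarith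
  obtain g where g: "path g" "pathstart g = b" "pathfinish g = a" "path_image g \<subseteq> X"
      "diameter (path_image g) \<le> L * cmod (b - a)"
    using turning \<open>a \<in> X\<close> \<open>b \<in> X\<close> unfolding turning_bound_def by blast
  have "cmod (b - a) < 3 * d"
    using norm_triangle_ineq[of "b - x" "x - a"] near unfolding d_def
    by (simp add: norm_minus_commute)
  have "path_image g \<subseteq> cball b (L * (3 * d))"
  proof
    fix p assume "p \<in> path_image g"
    then have "dist b p \<le> diameter (path_image g)"
      using diameter_bounded_bound[OF bounded_path_image[OF g(1)]] pathstart_in_path_image[of g] g(2)
      by blast
    also have "\<dots> \<le> L * (3 * d)"
      using g(5) mult_left_mono[OF less_imp_le[OF \<open>cmod (b - a) < 3 * d\<close>] \<open>L \<ge> 0\<close>]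
      by linarith
    finally show "p \<in> cball b (L * (3 * d))" by simp
  qed
  moreover have "2 * (L * (3 * d)) / (d / 4) = 24 * L" using \<open>d > 0\<close> by simp
  ultimately obtain ps where ps: "delta_chain b a (path_image g) (d / 4) ps"
      "length ps \<le> chain_length_bound L"
    using path_has_short_delta_chain[OF g(1), of b "L * (3 * d)" "d / 4"] \<open>d > 0\<close> g(2,3)
    unfolding chain_length_bound_def by auto
  then have chain: "delta_chain b a X (cmod (x - b) / 4) ps"
    using g(4) unfolding delta_chain_def d_def by blast
  have "ps \<noteq> []" using ps(1) unfolding delta_chain_def by blast
  then have "a = ps!(length ps - 1)"
    using ps(1) last_conv_nth[of ps] unfolding delta_chain_def by simp
  moreover have "b \<noteq> x" using \<open>d > 0\<close> unfolding d_def by auto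
  ultimately have "cmod (f x - f a) \<le> (1 + H)^(length ps - 1) * cmod (f x - f b)"
    using weakly_qs_along_delta_chain[OF qs \<open>H \<ge> 0\<close> \<open>x \<in> X\<close> _ chain, of "length ps - 1"]
      \<open>ps \<noteq> []\<close> by simp
  also have "\<dots> \<le> (1 + H)^chain_length_bound L * cmod (f x - f b)"
    using ps(2) \<open>H \<ge> 0\<close> by (intro mult_right_mono power_increasing) simp_all
  finally show ?thesis .
qed

lemma weakly_qs_iterated_doubling:
  assumes qs: "weakly_qs X f H" and "H \<ge> 0" and turning: "turning_bound X L" and "L \<ge> 0"
    and "connected X" and "x \<in> X" "a \<in> X" "b \<in> X"
    and near: "cmod (x - a) < 2^k * cmod (x - b)"
  shows "cmod (f x - f a) \<le> ((1 + H)^chain_length_bound L)^k * H * cmod (f x - f b)"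
  using near \<open>a \<in> X\<close>
proof (induction k arbitrary: a)
  case 0
  then show ?case using weakly_qsD[OF qs \<open>x \<in> X\<close> _ \<open>b \<in> X\<close>] by simp
next
  case (Suc k)
  define K where "K = (1 + H)^chain_length_bound L"
  have "K \<ge> 1" unfolding K_def using \<open>H \<ge> 0\<close> by simp
  show ?case
  proof (cases "a = x")
    case True
    then show ?thesis using \<open>K \<ge> 1\<close> \<open>H \<ge> 0\<close> unfolding K_def by simp
  next
    case False
  have "cmod (x - a) / 2 < min (cmod (x - a)) (2^k * cmod (x - b))"
    using Suc.prems(1) False by simp
  then obtain \<rho> where \<rho>: "cmod (x - a) / 2 < \<rho>" "\<rho> < min (cmod (x - a)) (2^k * cmod (x - b))"
    using dense by blast
  have "0 \<le> \<rho>" "\<rho> \<le> cmod (x - a)" using \<rho> norm_ge_zero[of "x - a"] by linarith+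
  then obtain c where c: "c \<in> X" "cmod (x - c) = \<rho>"
    using connected_distance_attained[OF \<open>connected X\<close> \<open>x \<in> X\<close> Suc.prems(2)] by blast
  have "cmod (f x - f c) \<le> K^k * H * cmod (f x - f b)"
    using Suc.IH c \<rho> unfolding K_def by simp
  moreover have "cmod (f x - f a) \<le> K * cmod (f x - f c)"
    using weakly_qs_doubling[OF qs \<open>H \<ge> 0\<close> turning \<open>L \<ge> 0\<close> \<open>x \<in> X\<close> Suc.prems(2) c(1)] \<rho>(1) c(2)
    unfolding K_def by simp
  ultimately have "cmod (f x - f a) \<le> K * (K^k * H * cmod (f x - f b))"
    using mult_left_mono[of _ _ K] \<open>K \<ge> 1\<close> by (meson order_trans zero_le_one)
  then show ?thesis unfolding K_def by (simp add: mult.assoc)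
  qed
qed

lemma weakly_qs_small_ratio:
  assumes qs: "weakly_qs X f H" and "H \<ge> 1" and "connected X"
    and "x \<in> X" "a \<in> X" "b \<in> X" and "0 < s" "s \<le> 1"
    and near: "cmod (x - a) < s * cmod (x - b)"
  shows "cmod (f x - f a) \<le> 2 * H * root (2 * decay_exponent H) s * cmod (f x - f b)"
proof -
  define m where "m = 2 * decay_exponent H"
  define D :: real where "D = 4^decay_exponent H"
  have "m > 0" unfolding m_def decay_exponent_def by simp
  have "D = 2^m" unfolding D_def m_def by (simp add: power_mult)
  then have "D > 1" using \<open>m > 0\<close> by simp
  obtain k where k: "D^k \<le> 1 / s" "1 / s < D^Suc k"
    using real_power_bracket[OF \<open>D > 1\<close>, of "1 / s"] \<open>0 < s\<close> \<open>s \<le> 1\<close> by auto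
  have "D^k * cmod (x - a) < D^k * (s * cmod (x - b))"
    using near \<open>D > 1\<close> by simp
  also have "\<dots> = (D^k * s) * cmod (x - b)" by simp
  also have "\<dots> \<le> cmod (x - b)"
    using k(1) \<open>0 < s\<close> \<open>D > 1\<close> by (intro mult_left_le_one_le) (simp_all add: le_divide_eq)
  finally have "cmod (f x - f a) \<le> H / 2^k * cmod (f x - f b)"
    using weakly_qs_iterated_decay[OF qs assms(2-6)] unfolding D_def by blast
  also have "H / 2^k \<le> 2 * H * root m s"
  proof -
    define r where "r = root m s"
    have "r \<ge> 0" "r^m = s" unfolding r_def using \<open>0 < s\<close> \<open>m > 0\<close> by simp_all
    have "1 < D^Suc k * s" using k(2) \<open>0 < s\<close> by (simp add: divide_less_eq)
    also have "D^Suc k * s = (2^Suc k * r)^m"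
      unfolding \<open>D = 2^m\<close> \<open>r^m = s\<close>[symmetric] by (simp add: power_mult_distrib flip: power_mult)
    finally have "1 < 2^Suc k * r"
      using power_le_one[of "2^Suc k * r" m] \<open>r \<ge> 0\<close> by fastforce
    then have "1 / 2^k < 2 * r" by (simp add: divide_less_eq mult_ac)
    then have "H * (1 / 2^k) \<le> H * (2 * r)" using \<open>H \<ge> 1\<close> by (intro mult_left_mono) simp_all
    then show ?thesis unfolding r_def by (simp add: mult_ac)
  qed
  then have "H / 2^k * cmod (f x - f b) \<le> 2 * H * root m s * cmod (f x - f b)"
    by (rule mult_right_mono) simp
  finally show ?thesis unfolding m_def .
qed

lemma weakly_qs_large_ratio:
  assumes qs: "weakly_qs X f H" and "H \<ge> 0" and turning: "turning_bound X L" and "L \<ge> 0"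
    and "connected X" and "x \<in> X" "a \<in> X" "b \<in> X" and "1 \<le> s"
    and near: "cmod (x - a) < s * cmod (x - b)"
    and exponent: "(1 + H)^chain_length_bound L \<le> 2^j"
  shows "cmod (f x - f a) \<le> H * 2^j * s^j * cmod (f x - f b)"
proof -
  obtain k where k: "2^k \<le> s" "s < 2^Suc k"
    using real_power_bracket[of 2 s] \<open>1 \<le> s\<close> by auto
  have "s * cmod (x - b) \<le> 2^Suc k * cmod (x - b)"
    using k(2) by (intro mult_right_mono) simp_all
  then have "cmod (x - a) < 2^Suc k * cmod (x - b)" using near by linarith
  then have "cmod (f x - f a) \<le> ((1 + H)^chain_length_bound L)^Suc k * H * cmod (f x - f b)"
    by (rule weakly_qs_iterated_doubling[OF qs assms(2-8)])
  also have "((1 + H)^chain_length_bound L)^Suc k \<le> 2^j * (2^k)^j"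
    using power_mono[OF exponent, of "Suc k"] \<open>H \<ge> 0\<close>
    by (simp add: power_mult[symmetric] mult.commute)
  also have "\<dots> \<le> 2^j * s^j"
    using k(1) by (intro mult_left_mono power_mono) simp_all
  finally show ?thesis
    using \<open>H \<ge> 0\<close> by (simp add: mult_right_mono mult_ac)
qed

section \<open>The distortion gauge\<close>

lemma one_plus_power_le_two_power:
  fixes H :: real
  assumes "H \<ge> 0"
  shows "(1 + H)^M \<le> 2^(M * nat \<lceil>H\<rceil>)"
proof -
  define n where "n = nat \<lceil>H\<rceil>"
  have "H \<le> real n" unfolding n_def by linarith
  moreover have "Suc n \<le> 2^n" using less_exp[of n] by (simp only: Suc_le_eq)
  then have "1 + real n \<le> 2^n" using of_nat_le_iff[of "Suc n" "2^n", where 'a = real] by simp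
  ultimately have "1 + H \<le> 2^n" by linarith
  then have "(1 + H)^M \<le> (2^n)^M" using \<open>H \<ge> 0\<close> by (intro power_mono) simp_all
  then show ?thesis unfolding n_def by (simp add: power_mult[symmetric] mult.commute)
qed

definition power_gauge :: "real \<Rightarrow> nat \<Rightarrow> nat \<Rightarrow> real \<Rightarrow> real" where
  "power_gauge A m j t = A * max (root m t) (t^j)"

lemma max_root_power_eq:
  fixes t :: real
  assumes "0 \<le> t" "m \<ge> 1" "j \<ge> 1"
  shows "max (root m t) (t^j) = (if t \<le> 1 then root m t else t^j)"
proof (cases "t \<le> 1")
  case True
  then have "t^j \<le> t" "t \<le> root m t"
    using assms power_decreasing[of 1 j t] real_root_increasing[of 1 m t] by simp_all
  then show ?thesis using True by simp
next
  case False
  then have "root m t \<le> t" "t \<le> t^j"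
    using assms power_increasing[of 1 j t] real_root_decreasing[of 1 m t] by simp_all
  then show ?thesis using False by simp
qed

lemma min_power_root_eq:
  fixes v :: real
  assumes "0 \<le> v" "m \<ge> 1" "j \<ge> 1"
  shows "min (v^m) (root j v) = (if v \<le> 1 then v^m else root j v)"
proof (cases "v \<le> 1")
  case True
  then have "v^m \<le> v" "v \<le> root j v"
    using assms power_decreasing[of 1 m v] real_root_increasing[of 1 j v] by simp_all
  then show ?thesis using True by simp
next
  case False
  then have "root j v \<le> v" "v \<le> v^m"
    using assms power_increasing[of 1 m v] real_root_decreasing[of 1 j v] by simp_all
  then show ?thesis using False by simp
qed

lemma power_gauge_homeomorphism:
  assumes "A > 0" "m \<ge> 1" "j \<ge> 1"
  shows "homeomorphism {0..} {0..} (power_gauge A m j) (\<lambda>u. min ((u / A)^m) (root j (u / A)))"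
proof (rule homeomorphismI)
  show "continuous_on {0..} (power_gauge A m j)"
    unfolding power_gauge_def by (intro continuous_intros)
  show "continuous_on {0..} (\<lambda>u. min ((u / A)^m) (root j (u / A)))"
    using \<open>A > 0\<close> by (intro continuous_intros) auto
  show "power_gauge A m j ` {0..} \<subseteq> {0..}"
    using \<open>A > 0\<close> unfolding power_gauge_def by (auto intro!: mult_nonneg_nonneg max.coboundedI1 real_root_ge_zero)
  show "(\<lambda>u. min ((u / A)^m) (root j (u / A))) ` {0..} \<subseteq> {0..}"
    using \<open>A > 0\<close> by (auto intro!: real_root_ge_zero)
  show "min ((power_gauge A m j t / A)^m) (root j (power_gauge A m j t / A)) = t"
    if "t \<in> {0..}" for t
  proof (cases "t \<le> 1")
    case True
    then have "power_gauge A m j t / A = root m t" "0 \<le> root m t" "root m t \<le> 1"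
      using that assms max_root_power_eq[of t m j] unfolding power_gauge_def
      by (simp_all add: real_root_ge_zero)
    then show ?thesis
      using that assms min_power_root_eq[of "root m t" m j] by simp
  next
    case False
    then have "power_gauge A m j t / A = t^j" "1 < t^j"
      using that assms max_root_power_eq[of t m j] unfolding power_gauge_def by simp_all
    then show ?thesis
      using that assms min_power_root_eq[of "t^j" m j] by (simp add: real_root_power_cancel)
  qed
  show "power_gauge A m j (min ((u / A)^m) (root j (u / A))) = u" if "u \<in> {0..}" for u
  proof (cases "u / A \<le> 1")
    case True
    then have "min ((u / A)^m) (root j (u / A)) = (u / A)^m" "0 \<le> (u / A)^m" "(u / A)^m \<le> 1"
      using that assms min_power_root_eq[of "u / A" m j] by (simp_all add: power_le_one)
    then show ?thesis
      using that assms max_root_power_eq[of "(u / A)^m" m j] unfolding power_gauge_def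
      by (simp add: real_root_power_cancel)
  next
    case False
    then have "min ((u / A)^m) (root j (u / A)) = root j (u / A)" "1 < root j (u / A)"
      using that assms min_power_root_eq[of "u / A" m j] by simp_all
    then show ?thesis
      using that assms max_root_power_eq[of "root j (u / A)" m j] unfolding power_gauge_def
      by simp
  qed
qed

lemma weakly_qs_power_gauge_bound:
  assumes qs: "weakly_qs X f H" and "H \<ge> 1" and turning: "turning_bound X L" and "L \<ge> 0"
    and "connected X" and exponent: "(1 + H)^chain_length_bound L \<le> 2^j"
    and "x \<in> X" "a \<in> X" "b \<in> X" and "t > 0" and ratio: "cmod (x - a) \<le> t * cmod (x - b)"
  shows "cmod (f x - f a) \<le> power_gauge (4 * H * 4^j) (2 * decay_exponent H) j t * cmod (f x - f b)"
proof (cases "b = x")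
  case True
  then show ?thesis using ratio by simp
next
  case False
  define m where "m = 2 * decay_exponent H"
  define F where "F = cmod (f x - f b)"
  have "t * cmod (x - b) < (2 * t) * cmod (x - b)" using False \<open>t > 0\<close> by simp
  with ratio have near: "cmod (x - a) < (2 * t) * cmod (x - b)" by linarith
  show ?thesis
  proof (cases "2 * t \<le> 1")
    case True
    have "cmod (f x - f a) \<le> 2 * H * root m (2 * t) * F"
      using weakly_qs_small_ratio[OF qs assms(2,5,7-9) _ True near] \<open>t > 0\<close>
      unfolding m_def F_def by simp
    also have "root m (2 * t) \<le> 2 * root m t"
      using real_root_decreasing[of 1 m 2] \<open>t > 0\<close>
      unfolding m_def decay_exponent_def by (simp add: real_root_mult mult_right_mono)
    then have "2 * H * root m (2 * t) * F \<le> 4 * H * root m t * F"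
      using \<open>H \<ge> 1\<close> by (simp add: F_def mult_left_mono mult_right_mono)
    also have "\<dots> \<le> power_gauge (4 * H * 4^j) m j t * F"
    proof -
      have "root m t \<le> max (root m t) (t^j)" by simp
      also have "\<dots> \<le> 4^j * max (root m t) (t^j)"
        using \<open>t > 0\<close> by (simp add: mult_le_cancel_right1)
      finally show ?thesis
        unfolding power_gauge_def F_def using \<open>H \<ge> 1\<close>
        by (intro mult_right_mono) (simp_all add: mult_left_mono mult.assoc)
    qed
    finally show ?thesis unfolding m_def F_def .
  next
    case False
    have "(2::real)^j * 2^j = 4^j" by (simp flip: power_mult_distrib)
    have "cmod (f x - f a) \<le> H * 2^j * (2 * t)^j * F"
      using weakly_qs_large_ratio[OF qs _ turning \<open>L \<ge> 0\<close> assms(5,7-9) _ near exponent] \<open>H \<ge> 1\<close> False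
      unfolding F_def by simp
    also have "\<dots> = H * 4^j * t^j * F"
      using \<open>(2::real)^j * 2^j = 4^j\<close> by (simp add: power_mult_distrib mult_ac)
    also have "\<dots> \<le> power_gauge (4 * H * 4^j) m j t * F"
    proof -
      have "H * 4^j * t^j \<le> 4 * H * 4^j * max (root m t) (t^j)"
        using \<open>H \<ge> 1\<close> \<open>t > 0\<close> by (intro mult_mono) simp_all
      then show ?thesis unfolding power_gauge_def F_def by (simp add: mult_right_mono)
    qed
    finally show ?thesis unfolding m_def F_def .
  qed
qed

lemma weakly_qs_imp_quasisymmetric:
  assumes "homeomorphism X Y f g" and turning: "turning_bound X L" "L \<ge> 0"
    and qs: "weakly_qs X f H" "H \<ge> 1"
  shows "quasisymmetric X Y f"
proof -
  define j where "j = chain_length_bound L * nat \<lceil>H\<rceil>"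
  define m where "m = 2 * decay_exponent H"
  define A where "A = 4 * H * 4^j"
  have "connected X"
    using turning_bound_imp_path_connected[OF turning(1)] path_connected_imp_connected by blast
  have "(1 + H)^chain_length_bound L \<le> 2^j"
    unfolding j_def using \<open>H \<ge> 1\<close> by (intro one_plus_power_le_two_power) simp
  then have bound: "\<forall>t>0. \<forall>a\<in>X. \<forall>b\<in>X. \<forall>x\<in>X. cmod (x - a) \<le> t * cmod (x - b) \<longrightarrow>
      cmod (f x - f a) \<le> power_gauge A m j t * cmod (f x - f b)"
    using weakly_qs_power_gauge_bound[OF qs turning \<open>connected X\<close>] unfolding A_def m_def by blast
  have "nat \<lceil>H\<rceil> \<ge> 1" using \<open>H \<ge> 1\<close> by linarith
  then have "j \<ge> 1" "m \<ge> 1" "A > 0"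
    using \<open>H \<ge> 1\<close> unfolding j_def m_def A_def chain_length_bound_def decay_exponent_def by simp_all
  then have "homeomorphism {0..} {0..} (power_gauge A m j) (\<lambda>u. min ((u / A)^m) (root j (u / A)))"
    by (intro power_gauge_homeomorphism)
  with bound show ?thesis
    unfolding quasisymmetric_def using assms(1) by blast
qed

section \<open>Roundness of images of balls\<close>

lemma le_ereal_mult_INF:
  fixes D :: ereal and d :: "'a \<Rightarrow> real"
  assumes "C > 0" and "\<And>w. w \<in> W \<Longrightarrow> D \<le> ereal (C * d w)"
  shows "D \<le> ereal C * (INF w\<in>W. ereal (d w))"
proof -
  have "D / ereal C \<le> (INF w\<in>W. ereal (d w))"
    using assms by (intro INF_greatest) (simp add: ereal_divide_le_pos)
  then show ?thesis using \<open>C > 0\<close> by (simp add: ereal_divide_le_pos)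
qed

lemma roundish_if_dist_le:
  assumes "C > 0" and "\<And>p w. p \<in> S \<Longrightarrow> w \<in> Y - S \<Longrightarrow> 2 * cmod (y - p) \<le> C * cmod (y - w)"
  shows "roundish C Y S y"
  unfolding roundish_def ediam_def inr_def
proof (rule le_ereal_mult_INF[OF \<open>C > 0\<close>], rule SUP_least)
  fix w and pq :: "complex \<times> complex" assume "w \<in> Y - S" "pq \<in> S \<times> S"
  then have "2 * cmod (y - fst pq) \<le> C * cmod (y - w)" "2 * cmod (y - snd pq) \<le> C * cmod (y - w)"
    using assms(2) by (auto simp: mem_Times_iff)
  moreover have "cmod (fst pq - snd pq) \<le> cmod (y - fst pq) + cmod (y - snd pq)"
    using norm_triangle_ineq[of "fst pq - y" "y - snd pq"] by (simp add: norm_minus_commute)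
  ultimately show "ereal (cmod (fst pq - snd pq)) \<le> ereal (C * cmod (y - w))" by simp
qed

lemma dist_le_if_roundish:
  assumes "roundish C Y S y" and "y \<in> S" "p \<in> S" "w \<in> Y - S"
  shows "cmod (y - p) \<le> \<bar>C\<bar> * cmod (y - w)"
proof -
  have "ereal (cmod (y - p)) \<le> ediam S"
    unfolding ediam_def using assms(2,3) by (intro SUP_upper2[of "(y, p)"]) auto
  also have "\<dots> \<le> ereal C * inr Y S y" using assms(1) unfolding roundish_def .
  finally have diam: "ereal (cmod (y - p)) \<le> ereal C * inr Y S y" .
  have "inr Y S y \<le> ereal (cmod (y - w))" "0 \<le> inr Y S y"
    unfolding inr_def using assms(4) by (auto intro: INF_lower2 INF_greatest)
  then obtain i where "inr Y S y = ereal i" "0 \<le> i" "i \<le> cmod (y - w)"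
    by (cases "inr Y S y") auto
  then have "cmod (y - p) \<le> C * i" using diam by simp
  also have "\<dots> \<le> \<bar>C\<bar> * i" using \<open>0 \<le> i\<close> by (simp add: mult_right_mono)
  also have "\<dots> \<le> \<bar>C\<bar> * cmod (y - w)" using \<open>i \<le> cmod (y - w)\<close> by (simp add: mult_left_mono)
  finally show ?thesis .
qed

lemma quasisymmetric_imp_roundish:
  assumes "quasisymmetric X Y f"
  shows "\<exists>C. \<forall>x\<in>X. \<forall>r>0. roundish C Y (f ` cballX X x r) (f x)"
proof -
  obtain g where hom: "homeomorphism X Y f g"
    using assms unfolding quasisymmetric_def by blast
  obtain \<eta> :: "real \<Rightarrow> real" where "\<forall>t>0. \<forall>a\<in>X. \<forall>b\<in>X. \<forall>x\<in>X. cmod (x - a) \<le> t * cmod (x - b) \<longrightarrow>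
      cmod (f x - f a) \<le> \<eta> t * cmod (f x - f b)"
    using assms unfolding quasisymmetric_def by blast
  then have qs: "\<And>t a b x. t > 0 \<Longrightarrow> a \<in> X \<Longrightarrow> b \<in> X \<Longrightarrow> x \<in> X \<Longrightarrow>
      cmod (x - a) \<le> t * cmod (x - b) \<Longrightarrow> cmod (f x - f a) \<le> \<eta> t * cmod (f x - f b)"
    by blast
  have "roundish (2 * \<bar>\<eta> 1\<bar> + 1) Y (f ` cballX X x r) (f x)" if "x \<in> X" for x r
  proof (rule roundish_if_dist_le)
    fix p w assume "p \<in> f ` cballX X x r" "w \<in> Y - f ` cballX X x r"
    then obtain a where a: "a \<in> X" "cmod (a - x) \<le> r" "p = f a"
      unfolding cballX_def by auto
    have "w \<in> Y" using \<open>w \<in> Y - _\<close> by blast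
    then have "g w \<in> X" "f (g w) = w"
      using homeomorphism_image2[OF hom] homeomorphism_apply2[OF hom] by blast+
    then have "g w \<notin> cballX X x r"
      using \<open>w \<in> Y - _\<close> image_eqI[where f = f and x = "g w" and A = "cballX X x r"] by auto
    then have "cmod (x - a) \<le> 1 * cmod (x - g w)"
      using a \<open>g w \<in> X\<close> unfolding cballX_def by (simp add: norm_minus_commute)
    then have "cmod (f x - p) \<le> \<eta> 1 * cmod (f x - w)"
      using qs[OF _ a(1) \<open>g w \<in> X\<close> that] a(3) \<open>f (g w) = w\<close> by simp
    moreover have "\<eta> 1 * cmod (f x - w) \<le> \<bar>\<eta> 1\<bar> * cmod (f x - w)"
      by (rule mult_right_mono) simp_all
    moreover have "0 \<le> cmod (f x - w)" by simp
    ultimately show "2 * cmod (f x - p) \<le> (2 * \<bar>\<eta> 1\<bar> + 1) * cmod (f x - w)"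
      unfolding distrib_right mult.assoc by linarith
  qed simp
  then show ?thesis by blast
qed

lemma roundish_imp_weakly_qs:
  assumes hom: "homeomorphism X Y f g"
    and round: "\<forall>x\<in>X. \<forall>r>0. roundish C Y (f ` cballX X x r) (f x)"
  shows "weakly_qs X f \<bar>C\<bar>"
  unfolding weakly_qs_def
proof (intro ballI impI)
  fix x a b assume "x \<in> X" "a \<in> X" "b \<in> X" and closer: "cmod (x - a) < cmod (x - b)"
  show "cmod (f x - f a) \<le> \<bar>C\<bar> * cmod (f x - f b)"
  proof (cases "a = x")
    case False
    define B where "B = cballX X x (cmod (x - a))"
    have "x \<in> B" "a \<in> B" "b \<notin> B"
      using \<open>x \<in> X\<close> \<open>a \<in> X\<close> closer unfolding B_def cballX_def by (auto simp: norm_minus_commute)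
    have "inj_on f X"
      by (rule inj_on_inverseI[where g = g]) (rule homeomorphism_apply1[OF hom])
    moreover have "B \<subseteq> X" unfolding B_def cballX_def by blast
    ultimately have "f b \<notin> f ` B"
      using inj_on_image_mem_iff \<open>b \<in> X\<close> \<open>b \<notin> B\<close> by metis
    moreover have "f b \<in> Y" using homeomorphism_image1[OF hom] \<open>b \<in> X\<close> by blast
    ultimately have "f b \<in> Y - f ` B" by blast
    then show ?thesis
      using dist_le_if_roundish[of C Y "f ` B" "f x" "f a" "f b"] round \<open>x \<in> X\<close> False
        \<open>x \<in> B\<close> \<open>a \<in> B\<close> unfolding B_def by simp
  qed simp
qed

theorem lemma3p2:
  fixes X Y :: "complex set" and f :: "complex \<Rightarrow> complex"
  assumes "\<exists>g. homeomorphism X Y f g"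
    and "bounded_turning X"
  shows "quasisymmetric X Y f \<longleftrightarrow>
    (\<exists>C::real. \<forall>x\<in>X. \<forall>r>0. roundish C Y (f ` cballX X x r) (f x))"
proof
  assume "quasisymmetric X Y f"
  then show "\<exists>C. \<forall>x\<in>X. \<forall>r>0. roundish C Y (f ` cballX X x r) (f x)"
    by (rule quasisymmetric_imp_roundish)
next
  assume "\<exists>C. \<forall>x\<in>X. \<forall>r>0. roundish C Y (f ` cballX X x r) (f x)"
  then obtain C where round: "\<forall>x\<in>X. \<forall>r>0. roundish C Y (f ` cballX X x r) (f x)" ..
  obtain g where hom: "homeomorphism X Y f g" using assms(1) ..
  obtain L where "L > 0" "turning_bound X L" using assms(2) unfolding bounded_turning_iff by blast
  have "weakly_qs X f (max 1 \<bar>C\<bar>)"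
    using weakly_qs_mono[OF roundish_imp_weakly_qs[OF hom round]] by simp
  then show "quasisymmetric X Y f"
    using weakly_qs_imp_quasisymmetric[OF hom \<open>turning_bound X L\<close>] \<open>L > 0\<close> by simp
qed

end
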